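(* Let $0<p<1$ and let $k\ge 1$ be an integer. A coin showing heads (H) with probability $p$ and tails (T) with probability $1-p$ is flipped independently until $k$ consecutive heads $\mathrm{H}^k$ first appear; let $Y$ be the number of flips. Then $E(Y^0)=1$ and for every $n\ge 1$, \[ E(Y^n) = k^n + \sum_{j=0}^{n-1} \binom{n}{j} E(Y^j) \sum_{i=1}^k \frac{(1-p)\,i^{n-j}}{p^{k-i+1}} = k^n + \sum_{j=0}^{n-1} \binom{n}{j} E(Y^j) \sum_{i=0}^n \frac{e_{n-j,i}\, p^i - e_{n-j,i}^k\, p^{k+i+1}}{(1-p)^{n-j}p^{k+1}}. \]
   Context: The Eulerian numbers $e_{n,i}$ are defined by $e_{0,0}=1$, $e_{n,i}=0$ whenever $i\le 0$ (unless $n=i=0$) or $i>n$, and $e_{n,i}=i\,e_{n-1,i}+(n-i+1)\,e_{n-1,i-1}$ otherwise. For the integer parameter $k$, $e^k_{0,0}=1$, $e^k_{n,i}=0$ whenever $i<0$ or $i>n$, and $e^k_{n,i}=(k+i+1)\,e^k_{n-1,i}+(n-k-i)\,e^k_{n-1,i-1}$ otherwise. *)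

theory Defs
  imports "HOL-Probability.Probability"
begin

fun eulerian :: "nat \<Rightarrow> nat \<Rightarrow> int" where
  "eulerian 0 i = (if i = 0 then 1 else 0)"
| "eulerian (Suc n) i =
     (if i = 0 \<or> i > Suc n then 0
      else int i * eulerian n i + int (Suc n - i + 1) * eulerian n (i - 1))"

fun eulerian_k :: "int \<Rightarrow> nat \<Rightarrow> nat \<Rightarrow> int" where
  "eulerian_k k 0 i = (if i = 0 then 1 else 0)"
| "eulerian_k k (Suc n) i =
     (if i > Suc n then 0
      else (k + int i + 1) * eulerian_k k n i
           + (int (Suc n) - k - int i) * (if i = 0 then 0 else eulerian_k k n (i - 1)))"

text \<open>Number of flips until k consecutive heads (True = heads) first appear:
  the least m >= k such that flips m-k, ..., m-1 (0-indexed) are all heads.\<close>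
definition waiting_time :: "nat \<Rightarrow> bool stream \<Rightarrow> nat" where
  "waiting_time k \<omega> = (LEAST m. k \<le> m \<and> (\<forall>i<k. \<omega> !! (m - 1 - i)))"

end

(*
  Condition on how the flip sequence starts: with probability p^i (1 - p), i < k, it starts
  with H^i T, after which the experiment starts afresh, so Y = i + 1 + Y' with Y' a copy of Y;
  with probability p^k it starts with H^k and Y = k.  Expanding (Y' + i + 1)^n binomially and
  solving for E(Y^n) gives the first formula.  The moments are finite because the same
  first-step argument bounds the moments of min(Y, N) uniformly in N.

  The second formula is the polynomial identity, for m >= 1,
    (1 - x)^(m+1) * sum_{i=1..k} i^m x^i = sum_i e_{m,i} x^i - x^(k+1) * sum_i e^k_{m,i} x^i.
  Both sides satisfy F_(m+1) = x ((1 - x) F_m' + (m + 1) F_m): on the left because x d/dx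
  maps sum_i i^m x^i to sum_i i^(m+1) x^i, on the right by the recurrences defining e and e^k.
  The recursion starts from (1 - x) * sum_{i=1..k} x^i = x - x^(k+1), whose first term is x
  rather than e_{0,0} = 1; this is why the identity only holds for m >= 1.
*)
theory Submission
  imports Defs "HOL-Computational_Algebra.Polynomial"
begin

section \<open>First-step decomposition over coin flips\<close>

abbreviation coin_flips :: "real \<Rightarrow> bool stream measure" where
  "coin_flips p \<equiv> stream_space (measure_pmf (bernoulli_pmf p))"

lemma prob_space_coin_flips: "prob_space (coin_flips p)"
  by (rule prob_space.prob_space_stream_space) (rule prob_space_measure_pmf)

lemma measurable_shift_const [measurable]:
  "(\<lambda>\<omega>. xs @- \<omega>) \<in> measurable (stream_space (measure_pmf M)) (stream_space (measure_pmf M))"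
  by (induction xs) (simp_all add: measurable_Stream)

lemma nn_integral_coin_flips_Cons:
  assumes "0 \<le> p" "p \<le> 1" and [measurable]: "G \<in> borel_measurable (coin_flips p)"
  shows "(\<integral>\<^sup>+\<omega>. G \<omega> \<partial>coin_flips p)
    = ennreal p * (\<integral>\<^sup>+\<omega>. G (True ## \<omega>) \<partial>coin_flips p) + ennreal (1 - p) * (\<integral>\<^sup>+\<omega>. G (False ## \<omega>) \<partial>coin_flips p)"
  using assms(1,2) by (subst prob_space.nn_integral_stream_space) (auto simp: prob_space_measure_pmf mult.commute)

lemma integrable_coin_flips_Cons:
  fixes G :: "bool stream \<Rightarrow> 'a::{banach, second_countable_topology}"
  assumes "0 < p" "p < 1" and G: "integrable (coin_flips p) G"
  shows "integrable (coin_flips p) (\<lambda>\<omega>. G (x ## \<omega>))"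
proof -
  have [measurable]: "G \<in> borel_measurable (coin_flips p)"
    using G by simp
  have "(\<integral>\<^sup>+\<omega>. norm (G \<omega>) \<partial>coin_flips p) < \<infinity>"
    using G unfolding integrable_iff_bounded by blast
  then have "ennreal p * (\<integral>\<^sup>+\<omega>. norm (G (True ## \<omega>)) \<partial>coin_flips p)
      + ennreal (1 - p) * (\<integral>\<^sup>+\<omega>. norm (G (False ## \<omega>)) \<partial>coin_flips p) < \<infinity>"
    using assms(1,2) by (subst (asm) nn_integral_coin_flips_Cons) auto
  then have "(\<integral>\<^sup>+\<omega>. norm (G (x ## \<omega>)) \<partial>coin_flips p) < \<infinity>"
    using assms(1,2) by (cases x) (auto simp: ennreal_mult_less_top top_unique)
  then show ?thesis
    by (simp add: integrable_iff_bounded)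
qed

lemma integrable_coin_flips_shift:
  fixes G :: "bool stream \<Rightarrow> 'a::{banach, second_countable_topology}"
  assumes "0 < p" "p < 1" "integrable (coin_flips p) G"
  shows "integrable (coin_flips p) (\<lambda>\<omega>. G (xs @- \<omega>))"
  using assms(3)
proof (induction xs arbitrary: G)
  case (Cons x xs)
  show ?case
    using Cons.IH[OF integrable_coin_flips_Cons[OF assms(1,2) Cons.prems]] by simp
qed simp

lemma integral_coin_flips_Cons:
  fixes G :: "bool stream \<Rightarrow> real"
  assumes "0 < p" "p < 1" and G: "integrable (coin_flips p) G" "\<And>\<omega>. 0 \<le> G \<omega>"
  shows "(\<integral>\<omega>. G \<omega> \<partial>coin_flips p)
    = p * (\<integral>\<omega>. G (True ## \<omega>) \<partial>coin_flips p) + (1 - p) * (\<integral>\<omega>. G (False ## \<omega>) \<partial>coin_flips p)"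
proof -
  have [measurable]: "G \<in> borel_measurable (coin_flips p)"
    using G by simp
  have nn: "(\<integral>\<^sup>+\<omega>. G (xs @- \<omega>) \<partial>coin_flips p) = ennreal (\<integral>\<omega>. G (xs @- \<omega>) \<partial>coin_flips p)" for xs
    using integrable_coin_flips_shift[OF assms(1-3)] G(2) by (intro nn_integral_eq_integral) auto
  have "ennreal (\<integral>\<omega>. G \<omega> \<partial>coin_flips p)
      = ennreal p * ennreal (\<integral>\<omega>. G (True ## \<omega>) \<partial>coin_flips p)
        + ennreal (1 - p) * ennreal (\<integral>\<omega>. G (False ## \<omega>) \<partial>coin_flips p)"
    using nn_integral_coin_flips_Cons[of p "\<lambda>\<omega>. ennreal (G \<omega>)"] nn[of "[]"] nn[of "[True]"] nn[of "[False]"] assms(1,2)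
    by simp
  also have "\<dots> = ennreal (p * (\<integral>\<omega>. G (True ## \<omega>) \<partial>coin_flips p) + (1 - p) * (\<integral>\<omega>. G (False ## \<omega>) \<partial>coin_flips p))"
    using assms(1,2) G(2) by (simp add: ennreal_mult ennreal_plus integral_nonneg)
  finally show ?thesis
    using assms(1,2) G(2) by (subst (asm) ennreal_inj) (auto intro!: add_nonneg_nonneg integral_nonneg)
qed

lemma integral_coin_flips_split:
  fixes G :: "bool stream \<Rightarrow> real"
  assumes "0 < p" "p < 1" and G: "integrable (coin_flips p) G" "\<And>\<omega>. 0 \<le> G \<omega>"
  shows "(\<integral>\<omega>. G \<omega> \<partial>coin_flips p)
    = (\<Sum>i<m. p ^ i * (1 - p) * (\<integral>\<omega>. G (replicate i True @- False ## \<omega>) \<partial>coin_flips p))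
      + p ^ m * (\<integral>\<omega>. G (replicate m True @- \<omega>) \<partial>coin_flips p)"
proof (induction m)
  case (Suc m)
  have "replicate (Suc m) True @- \<omega> = replicate m True @- True ## \<omega>" for \<omega>
    by (simp flip: replicate_append_same)
  then have "(\<integral>\<omega>. G (replicate m True @- \<omega>) \<partial>coin_flips p)
      = p * (\<integral>\<omega>. G (replicate (Suc m) True @- \<omega>) \<partial>coin_flips p)
        + (1 - p) * (\<integral>\<omega>. G (replicate m True @- False ## \<omega>) \<partial>coin_flips p)"
    using integral_coin_flips_Cons[OF assms(1,2) integrable_coin_flips_shift[OF assms(1,2) G(1)], of "replicate m True"] G(2)
    by (simp del: replicate_Suc)
  with Suc.IH show ?case
    by (simp add: algebra_simps del: replicate_Suc)
qed simp

section \<open>The waiting time\<close>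

definition heads_run_ends_at :: "nat \<Rightarrow> nat \<Rightarrow> bool stream \<Rightarrow> bool" where
  "heads_run_ends_at k m \<omega> \<longleftrightarrow> k \<le> m \<and> (\<forall>i<k. \<omega> !! (m - 1 - i))"

lemma waiting_time_eq_Least: "waiting_time k \<omega> = (LEAST m. heads_run_ends_at k m \<omega>)"
  unfolding waiting_time_def heads_run_ends_at_def ..

lemma measurable_heads_run_ends_at [measurable]:
  "Measurable.pred (stream_space (measure_pmf M)) (heads_run_ends_at k m)"
proof -
  have [measurable]: "(\<lambda>\<omega>. \<omega> !! n) \<in> measurable (stream_space (measure_pmf M)) (count_space UNIV)" for n
    using measurable_snth[of n "measure_pmf M"] by (simp add: measurable_cong_sets)
  show ?thesis
    unfolding heads_run_ends_at_def by measurable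
qed

lemma measurable_waiting_time [measurable]:
  "waiting_time k \<in> measurable (stream_space (measure_pmf M)) (count_space UNIV)"
  unfolding waiting_time_eq_Least by measurable

lemma heads_run_ends_at_replicate_True: "heads_run_ends_at k k (replicate k True @- \<omega>)"
  by (simp add: heads_run_ends_at_def)

lemma waiting_time_replicate_True: "waiting_time k (replicate k True @- \<omega>) = k"
  unfolding waiting_time_eq_Least
  by (rule Least_equality) (auto simp: heads_run_ends_at_replicate_True heads_run_ends_at_def)

lemma heads_run_ends_at_shift:
  assumes "k \<le> m"
  shows "heads_run_ends_at k (length xs + m) (xs @- \<omega>) \<longleftrightarrow> heads_run_ends_at k m \<omega>"
proof -
  have "(xs @- \<omega>) !! (length xs + m - 1 - i) = \<omega> !! (m - 1 - i)" if "i < k" for i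
    using that assms by (simp add: shift_snth_ge)
  then show ?thesis
    using assms by (auto simp: heads_run_ends_at_def)
qed

lemma not_heads_run_ends_at_tails:
  assumes "i < k" "m < Suc i + k"
  shows "\<not> heads_run_ends_at k m (replicate i True @- False ## \<omega>)"
proof
  assume run: "heads_run_ends_at k m (replicate i True @- False ## \<omega>)"
  then have "m - 1 - i < k" "m - 1 - (m - 1 - i) = i"
    using assms by (auto simp: heads_run_ends_at_def)
  with run have "(replicate i True @- False ## \<omega>) !! i"
    unfolding heads_run_ends_at_def by metis
  then show False
    by (simp add: shift_snth)
qed

lemma heads_run_ends_at_tails_iff:
  assumes "i < k"
  shows "heads_run_ends_at k m (replicate i True @- False ## \<omega>) \<longleftrightarrow> Suc i + k \<le> m \<and> heads_run_ends_at k (m - Suc i) \<omega>"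
proof (cases "Suc i + k \<le> m")
  case True
  then have "heads_run_ends_at k (length (replicate i True @ [False]) + (m - Suc i)) ((replicate i True @ [False]) @- \<omega>)
      \<longleftrightarrow> heads_run_ends_at k (m - Suc i) \<omega>"
    by (intro heads_run_ends_at_shift) simp
  with True show ?thesis
    by simp
qed (use not_heads_run_ends_at_tails[OF assms] in simp)

lemma ex_heads_run_ends_at_tails_iff:
  assumes "i < k"
  shows "(\<exists>m. heads_run_ends_at k m (replicate i True @- False ## \<omega>)) \<longleftrightarrow> (\<exists>m. heads_run_ends_at k m \<omega>)"
  unfolding heads_run_ends_at_tails_iff[OF assms]
  by (metis add_diff_cancel_left' add_le_cancel_left heads_run_ends_at_def)

lemma waiting_time_tails:
  assumes "i < k" "\<exists>m. heads_run_ends_at k m \<omega>"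
  shows "waiting_time k (replicate i True @- False ## \<omega>) = Suc i + waiting_time k \<omega>"
  unfolding waiting_time_eq_Least[of k "replicate i True @- False ## \<omega>"] heads_run_ends_at_tails_iff[OF assms(1)]
proof (rule Least_equality)
  have "heads_run_ends_at k (waiting_time k \<omega>) \<omega>"
    unfolding waiting_time_eq_Least using assms(2) by (rule LeastI_ex)
  then show "Suc i + k \<le> Suc i + waiting_time k \<omega> \<and> heads_run_ends_at k (Suc i + waiting_time k \<omega> - Suc i) \<omega>"
    by (simp add: heads_run_ends_at_def)
next
  fix m
  assume "Suc i + k \<le> m \<and> heads_run_ends_at k (m - Suc i) \<omega>"
  then have "waiting_time k \<omega> \<le> m - Suc i" "Suc i \<le> m"
    unfolding waiting_time_eq_Least by (auto intro: Least_le)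
  then show "Suc i + waiting_time k \<omega> \<le> m"
    by simp
qed

lemma waiting_time_tails_le:
  assumes "i < k"
  shows "waiting_time k (replicate i True @- False ## \<omega>) \<le> Suc i + waiting_time k \<omega>"
proof (cases "\<exists>m. heads_run_ends_at k m \<omega>")
  case False
  \<comment> \<open>Then both waiting times are \<open>LEAST\<close> of the empty predicate, i.e. the same junk value.\<close>
  with ex_heads_run_ends_at_tails_iff[OF assms]
  have "(\<lambda>m. heads_run_ends_at k m (replicate i True @- False ## \<omega>)) = (\<lambda>m. heads_run_ends_at k m \<omega>)"
    by blast
  then show ?thesis
    unfolding waiting_time_eq_Least by simp
qed (simp add: waiting_time_tails[OF assms])

section \<open>Moments of the waiting time\<close>

lemma sum_geometric_weights:
  fixes p x :: real
  shows "(\<Sum>i<k. p ^ i * (1 - p) * (x + s i)) = (1 - p ^ k) * x + (\<Sum>i<k. p ^ i * (1 - p) * s i)"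
  by (simp add: one_diff_power_eq distrib_left sum.distrib sum_distrib_left sum_distrib_right mult_ac)

lemma
  fixes X :: "'a \<Rightarrow> real"
  assumes "\<And>j. integrable M (\<lambda>\<omega>. X \<omega> ^ j)"
  shows integrable_power_add_const: "integrable M (\<lambda>\<omega>. (X \<omega> + c) ^ n)"
    and integral_power_add_const:
      "(\<integral>\<omega>. (X \<omega> + c) ^ n \<partial>M) = (\<integral>\<omega>. X \<omega> ^ n \<partial>M) + (\<Sum>j<n. real (n choose j) * c ^ (n - j) * (\<integral>\<omega>. X \<omega> ^ j \<partial>M))"
proof -
  have binomial: "(X \<omega> + c) ^ n = (\<Sum>j\<le>n. real (n choose j) * c ^ (n - j) * X \<omega> ^ j)" for \<omega>
    by (simp add: binomial_ring mult_ac)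
  show "integrable M (\<lambda>\<omega>. (X \<omega> + c) ^ n)"
    unfolding binomial using assms by simp
  show "(\<integral>\<omega>. (X \<omega> + c) ^ n \<partial>M) = (\<integral>\<omega>. X \<omega> ^ n \<partial>M) + (\<Sum>j<n. real (n choose j) * c ^ (n - j) * (\<integral>\<omega>. X \<omega> ^ j \<partial>M))"
    unfolding binomial using assms by (simp add: lessThan_Suc_atMost[symmetric])
qed

lemma integrable_min_waiting_time_power:
  "integrable (coin_flips p) (\<lambda>\<omega>. real (min (waiting_time k \<omega>) N) ^ n)"
proof -
  interpret prob_space "coin_flips p"
    by (rule prob_space_coin_flips)
  show ?thesis
    by (rule integrable_const_bound[where B = "real N ^ n"]) (auto intro!: power_mono)
qed

lemma moment_min_waiting_time_first_step:
  fixes p :: real and k N :: nat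
  assumes "0 < p" "p < 1"
  defines "\<psi> \<equiv> \<lambda>j. \<integral>\<omega>. real (min (waiting_time k \<omega>) N) ^ j \<partial>coin_flips p"
  shows "p ^ k * \<psi> n
    \<le> (\<Sum>i<k. p ^ i * (1 - p) * (\<Sum>j<n. real (n choose j) * real (Suc i) ^ (n - j) * \<psi> j)) + p ^ k * real k ^ n"
proof -
  interpret prob_space "coin_flips p"
    by (rule prob_space_coin_flips)
  let ?Y = "\<lambda>\<omega>. real (min (waiting_time k \<omega>) N)"
  define S where "S i = (\<Sum>j<n. real (n choose j) * real (Suc i) ^ (n - j) * \<psi> j)" for i
  have tails: "(\<integral>\<omega>. ?Y (replicate i True @- False ## \<omega>) ^ n \<partial>coin_flips p) \<le> \<psi> n + S i" if "i < k" for i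
  proof -
    have "min (waiting_time k (replicate i True @- False ## \<omega>)) N \<le> min (waiting_time k \<omega>) N + Suc i" for \<omega>
      using waiting_time_tails_le[OF that, of \<omega>] by linarith
    then have le: "?Y (replicate i True @- False ## \<omega>) \<le> ?Y \<omega> + real (Suc i)" for \<omega>
      by (metis of_nat_add of_nat_mono)
    have "integrable (coin_flips p) (\<lambda>\<omega>. ?Y (replicate i True @- False ## \<omega>) ^ n)"
      using integrable_coin_flips_shift[OF assms(1,2) integrable_min_waiting_time_power, where xs = "replicate i True @ [False]"]
      by simp
    then have "(\<integral>\<omega>. ?Y (replicate i True @- False ## \<omega>) ^ n \<partial>coin_flips p) \<le> (\<integral>\<omega>. (?Y \<omega> + real (Suc i)) ^ n \<partial>coin_flips p)"
      using le by (intro integral_mono integrable_power_add_const integrable_min_waiting_time_power power_mono) auto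
    also have "\<dots> = \<psi> n + S i"
      unfolding \<psi>_def S_def by (intro integral_power_add_const integrable_min_waiting_time_power)
    finally show ?thesis .
  qed
  have heads: "(\<integral>\<omega>. ?Y (replicate k True @- \<omega>) ^ n \<partial>coin_flips p) \<le> real k ^ n"
    by (simp add: waiting_time_replicate_True prob_space power_mono)
  have "\<psi> n = (\<Sum>i<k. p ^ i * (1 - p) * (\<integral>\<omega>. ?Y (replicate i True @- False ## \<omega>) ^ n \<partial>coin_flips p))
      + p ^ k * (\<integral>\<omega>. ?Y (replicate k True @- \<omega>) ^ n \<partial>coin_flips p)"
    unfolding \<psi>_def by (intro integral_coin_flips_split assms integrable_min_waiting_time_power) simp
  also have "\<dots> \<le> (\<Sum>i<k. p ^ i * (1 - p) * (\<psi> n + S i)) + p ^ k * real k ^ n"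
    using assms(1,2) tails heads by (intro add_mono sum_mono mult_left_mono) auto
  finally show ?thesis
    unfolding sum_geometric_weights S_def by (simp add: algebra_simps)
qed

lemma moment_min_waiting_time_bounded:
  assumes "0 < p" "p < 1"
  shows "\<exists>C. \<forall>N. (\<integral>\<omega>. real (min (waiting_time k \<omega>) N) ^ n \<partial>coin_flips p) \<le> C"
proof (induction n rule: less_induct)
  case (less n)
  define \<psi> where "\<psi> j N = (\<integral>\<omega>. real (min (waiting_time k \<omega>) N) ^ j \<partial>coin_flips p)" for j N
  have "\<forall>j. \<exists>C. j < n \<longrightarrow> (\<forall>N. \<psi> j N \<le> C)"
    using less unfolding \<psi>_def by blast
  then obtain C where C: "\<And>j N. j < n \<Longrightarrow> \<psi> j N \<le> C j"
    by metis
  have "\<psi> n N \<le> ((\<Sum>i<k. p ^ i * (1 - p) * (\<Sum>j<n. real (n choose j) * real (Suc i) ^ (n - j) * C j)) + p ^ k * real k ^ n) / p ^ k"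
    for N
  proof -
    have "p ^ k * \<psi> n N
        \<le> (\<Sum>i<k. p ^ i * (1 - p) * (\<Sum>j<n. real (n choose j) * real (Suc i) ^ (n - j) * \<psi> j N)) + p ^ k * real k ^ n"
      unfolding \<psi>_def by (rule moment_min_waiting_time_first_step[OF assms])
    also have "\<dots> \<le> (\<Sum>i<k. p ^ i * (1 - p) * (\<Sum>j<n. real (n choose j) * real (Suc i) ^ (n - j) * C j)) + p ^ k * real k ^ n"
      using assms C by (intro add_mono sum_mono mult_left_mono order_refl) auto
    finally show ?thesis
      using assms(1) by (simp add: field_simps)
  qed
  then show ?case
    unfolding \<psi>_def by blast
qed

lemma integrable_waiting_time_power:
  assumes "0 < p" "p < 1"
  shows "integrable (coin_flips p) (\<lambda>\<omega>. real (waiting_time k \<omega>) ^ n)"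
proof -
  obtain C where C: "\<And>N. (\<integral>\<omega>. real (min (waiting_time k \<omega>) N) ^ n \<partial>coin_flips p) \<le> C"
    using moment_min_waiting_time_bounded[OF assms] by blast
  have "ennreal (real (waiting_time k \<omega>) ^ n) \<le> (SUP N. ennreal (real (min (waiting_time k \<omega>) N) ^ n))" for \<omega>
    by (rule SUP_upper2[of "waiting_time k \<omega>"]) auto
  then have "(\<integral>\<^sup>+\<omega>. real (waiting_time k \<omega>) ^ n \<partial>coin_flips p)
      \<le> (\<integral>\<^sup>+\<omega>. (SUP N. ennreal (real (min (waiting_time k \<omega>) N) ^ n)) \<partial>coin_flips p)"
    by (intro nn_integral_mono)
  also have "\<dots> = (SUP N. \<integral>\<^sup>+\<omega>. real (min (waiting_time k \<omega>) N) ^ n \<partial>coin_flips p)"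
    by (intro nn_integral_monotone_convergence_SUP)
      (auto simp: incseq_def le_fun_def intro!: ennreal_leI power_mono)
  also have "\<dots> \<le> ennreal C"
  proof (intro SUP_least)
    fix N
    show "(\<integral>\<^sup>+\<omega>. real (min (waiting_time k \<omega>) N) ^ n \<partial>coin_flips p) \<le> ennreal C"
      using C[of N] by (subst nn_integral_eq_integral) (auto intro: integrable_min_waiting_time_power ennreal_leI)
  qed
  finally have "(\<integral>\<^sup>+\<omega>. real (waiting_time k \<omega>) ^ n \<partial>coin_flips p) < \<infinity>"
    by (metis ennreal_less_top infinity_ennreal_def le_less_trans)
  then show ?thesis
    by (intro integrableI_bounded) auto
qed

lemma AE_coin_flips_heads_run:
  assumes "0 < p" "p < 1"
  shows "AE \<omega> in coin_flips p. \<exists>m. heads_run_ends_at k m \<omega>"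
proof -
  interpret prob_space "coin_flips p"
    by (rule prob_space_coin_flips)
  define G where "G \<omega> = (if \<exists>m. heads_run_ends_at k m \<omega> then 0 else 1 :: real)" for \<omega>
  have [measurable]: "G \<in> borel_measurable (coin_flips p)"
    unfolding G_def by measurable
  then have G: "integrable (coin_flips p) G" "\<And>\<omega>. 0 \<le> G \<omega>"
    by (auto intro!: integrable_const_bound[where B = 1] simp: G_def)
  have tails: "(\<integral>\<omega>. G (replicate i True @- False ## \<omega>) \<partial>coin_flips p) = (\<integral>\<omega>. G \<omega> \<partial>coin_flips p)"
    if "i < k" for i
    using ex_heads_run_ends_at_tails_iff[OF that] by (simp add: G_def)
  have heads: "G (replicate k True @- \<omega>) = 0" for \<omega>
    using heads_run_ends_at_replicate_True by (auto simp: G_def)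
  have "(\<integral>\<omega>. G \<omega> \<partial>coin_flips p)
      = (\<Sum>i<k. p ^ i * (1 - p) * (\<integral>\<omega>. G (replicate i True @- False ## \<omega>) \<partial>coin_flips p))
        + p ^ k * (\<integral>\<omega>. G (replicate k True @- \<omega>) \<partial>coin_flips p)"
    by (rule integral_coin_flips_split[OF assms G])
  also have "\<dots> = (\<Sum>i<k. p ^ i * (1 - p) * ((\<integral>\<omega>. G \<omega> \<partial>coin_flips p) + 0))"
    using tails by (simp add: heads)
  finally have "(\<integral>\<omega>. G \<omega> \<partial>coin_flips p) = 0"
    using assms unfolding sum_geometric_weights by (simp add: algebra_simps)
  then have "AE \<omega> in coin_flips p. G \<omega> = 0"
    using G by (subst (asm) integral_nonneg_eq_0_iff_AE) auto
  then show ?thesis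
    by eventually_elim (auto simp: G_def split: if_splits)
qed

lemma moment_waiting_time_first_step:
  fixes p :: real and k n :: nat
  assumes "0 < p" "p < 1"
  defines "E \<equiv> \<lambda>j. \<integral>\<omega>. real (waiting_time k \<omega>) ^ j \<partial>coin_flips p"
  shows "p ^ k * E n
    = (\<Sum>i<k. p ^ i * (1 - p) * (\<Sum>j<n. real (n choose j) * real (Suc i) ^ (n - j) * E j)) + p ^ k * real k ^ n"
proof -
  interpret prob_space "coin_flips p"
    by (rule prob_space_coin_flips)
  note integrable = integrable_waiting_time_power[OF assms(1,2)]
  define S where "S i = (\<Sum>j<n. real (n choose j) * real (Suc i) ^ (n - j) * E j)" for i
  have tails: "(\<integral>\<omega>. real (waiting_time k (replicate i True @- False ## \<omega>)) ^ n \<partial>coin_flips p) = E n + S i"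
    if "i < k" for i
  proof -
    have "AE \<omega> in coin_flips p.
        real (waiting_time k (replicate i True @- False ## \<omega>)) ^ n = (real (waiting_time k \<omega>) + real (Suc i)) ^ n"
      using AE_coin_flips_heads_run[OF assms(1,2), where k = k] by eventually_elim (simp add: waiting_time_tails[OF that] add_ac)
    then have "(\<integral>\<omega>. real (waiting_time k (replicate i True @- False ## \<omega>)) ^ n \<partial>coin_flips p)
        = (\<integral>\<omega>. (real (waiting_time k \<omega>) + real (Suc i)) ^ n \<partial>coin_flips p)"
      by (intro integral_cong_AE) measurable
    also have "\<dots> = E n + S i"
      unfolding E_def S_def by (intro integral_power_add_const integrable)
    finally show ?thesis .
  qed
  have "E n = (\<Sum>i<k. p ^ i * (1 - p) * (\<integral>\<omega>. real (waiting_time k (replicate i True @- False ## \<omega>)) ^ n \<partial>coin_flips p))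
      + p ^ k * (\<integral>\<omega>. real (waiting_time k (replicate k True @- \<omega>)) ^ n \<partial>coin_flips p)"
    unfolding E_def by (intro integral_coin_flips_split assms(1,2) integrable) simp
  also have "\<dots> = (\<Sum>i<k. p ^ i * (1 - p) * (E n + S i)) + p ^ k * real k ^ n"
    using tails by (simp add: waiting_time_replicate_True prob_space)
  finally show ?thesis
    unfolding sum_geometric_weights S_def by (simp add: algebra_simps)
qed

section \<open>Eulerian polynomials and power sums\<close>

lemma eulerian_eq_0: "m < i \<Longrightarrow> eulerian m i = 0"
  by (cases m) auto

lemma eulerian_k_eq_0: "m < i \<Longrightarrow> eulerian_k c m i = 0"
  by (cases m) auto

definition eulerian_poly :: "nat \<Rightarrow> 'a::comm_ring_1 poly" where
  "eulerian_poly m = (\<Sum>i\<le>m. monom (of_int (eulerian m i)) i)"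

definition eulerian_k_poly :: "nat \<Rightarrow> nat \<Rightarrow> 'a::comm_ring_1 poly" where
  "eulerian_k_poly k m = (\<Sum>i\<le>m. monom (of_int (eulerian_k (int k) m i)) i)"

definition power_sum_poly :: "nat \<Rightarrow> nat \<Rightarrow> 'a::comm_semiring_1 poly" where
  "power_sum_poly k m = (\<Sum>i=1..k. monom (of_nat i ^ m) i)"

definition eulerian_op :: "nat \<Rightarrow> 'a::idom poly \<Rightarrow> 'a poly" where
  "eulerian_op m Q = [:0, 1:] * ([:1, -1:] * pderiv Q + smult (of_nat (Suc m)) Q)"

lemma coeff_eulerian_poly [simp]: "coeff (eulerian_poly m) i = of_int (eulerian m i)"
  by (simp add: eulerian_poly_def coeff_sum eulerian_eq_0)

lemma coeff_eulerian_k_poly [simp]: "coeff (eulerian_k_poly k m) i = of_int (eulerian_k (int k) m i)"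
  by (simp add: eulerian_k_poly_def coeff_sum eulerian_k_eq_0)

lemma coeff_power_sum_poly:
  "coeff (power_sum_poly k m) i = (if 1 \<le> i \<and> i \<le> k then of_nat i ^ m else 0)"
  by (simp add: power_sum_poly_def coeff_sum)

lemma coeff_eulerian_op_0 [simp]: "coeff (eulerian_op m Q) 0 = 0"
  by (simp add: eulerian_op_def)

lemma coeff_eulerian_op_Suc [simp]:
  "coeff (eulerian_op m Q) (Suc i) = of_nat (Suc i) * coeff Q (Suc i) + (of_nat m + 1 - of_nat i) * coeff Q i"
  by (cases i) (simp_all add: eulerian_op_def coeff_pderiv algebra_simps)

lemma eulerian_op_diff: "eulerian_op m (P - Q) = eulerian_op m P - eulerian_op m Q"
proof (rule poly_eqI)
  fix i
  show "coeff (eulerian_op m (P - Q)) i = coeff (eulerian_op m P - eulerian_op m Q) i"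
    by (cases i) (simp_all add: algebra_simps)
qed

lemma eulerian_poly_Suc: "eulerian_poly (Suc m) = eulerian_op m (eulerian_poly m)"
proof (rule poly_eqI)
  fix i
  show "coeff (eulerian_poly (Suc m)) i = coeff (eulerian_op m (eulerian_poly m)) i"
  proof (cases i)
    case (Suc s)
    then show ?thesis
      by (cases "s \<le> m") (simp_all add: of_nat_diff eulerian_eq_0)
  qed simp
qed

lemma eulerian_k_poly_Suc:
  "monom (1::'a::idom) (k + 1) * eulerian_k_poly k (Suc m) = eulerian_op m (monom 1 (k + 1) * eulerian_k_poly k m)"
proof (rule poly_eqI)
  fix i
  show "coeff (monom (1::'a) (k + 1) * eulerian_k_poly k (Suc m)) i
      = coeff (eulerian_op m (monom 1 (k + 1) * eulerian_k_poly k m)) i"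
  proof (cases "i \<le> k + 1")
    case True
    then show ?thesis
      by (cases i) (auto simp: coeff_monom_mult)
  next
    case False
    then obtain j where i: "i = Suc (k + 1 + j)"
      by (metis less_imp_Suc_add not_le)
    have "coeff (monom (1::'a) (k + 1) * eulerian_k_poly k (Suc m)) i = of_int (eulerian_k (int k) (Suc m) (Suc j))"
      by (simp add: i coeff_monom_mult)
    also have "\<dots> = of_nat (Suc (k + 1 + j)) * of_int (eulerian_k (int k) m (Suc j))
          + (of_nat m + 1 - of_nat (k + 1 + j)) * of_int (eulerian_k (int k) m j)"
      by (cases "j \<le> m") (simp_all add: eulerian_k_eq_0 algebra_simps)
    also have "\<dots> = coeff (eulerian_op m (monom 1 (k + 1) * eulerian_k_poly k m)) i"
      unfolding i coeff_eulerian_op_Suc by (simp add: coeff_monom_mult)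
    finally show ?thesis .
  qed
qed

lemma power_sum_poly_Suc: "power_sum_poly k (Suc m) = [:0, 1:] * pderiv (power_sum_poly k m)"
proof (rule poly_eqI)
  fix i
  show "coeff (power_sum_poly k (Suc m)) i = coeff ([:0, 1:] * pderiv (power_sum_poly k m)) i"
    by (cases i) (simp_all add: coeff_power_sum_poly coeff_pderiv)
qed

lemma eulerian_op_one_minus_power:
  fixes P :: "'a::idom poly"
  shows "eulerian_op m ([:1, -1:] ^ Suc m * P) = [:1, -1:] ^ Suc (Suc m) * ([:0, 1:] * pderiv P)"
proof -
  define U :: "'a poly" where "U = [:1, -1:]"
  have "pderiv U = -1"
    by (simp add: U_def pderiv_pCons one_pCons)
  then have deriv: "pderiv (U ^ Suc m * P) = U ^ Suc m * pderiv P - smult (of_nat (Suc m)) (U ^ m * P)"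
    by (simp only: pderiv_mult pderiv_power_Suc) (simp add: algebra_simps)
  have "U * pderiv (U ^ Suc m * P) + smult (of_nat (Suc m)) (U ^ Suc m * P) = U ^ Suc (Suc m) * pderiv P"
    unfolding deriv by (simp add: algebra_simps)
  then show ?thesis
    by (simp add: eulerian_op_def U_def mult.left_commute del: power_Suc)
qed

lemma one_minus_mult_power_sum_poly_0:
  "[:1, -1:] * power_sum_poly k 0 = [:0, 1:] - monom (1::'a::idom) (k + 1) * eulerian_k_poly k 0"
proof (rule poly_eqI)
  fix i
  show "coeff ([:1, -1:] * power_sum_poly k 0) i = coeff ([:0, 1:] - monom (1::'a) (k + 1) * eulerian_k_poly k 0) i"
    by (cases i) (auto simp: coeff_power_sum_poly coeff_monom_mult coeff_pCons split: nat.split)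
qed

lemma one_minus_power_mult_power_sum_poly_Suc:
  "[:1, -1:] ^ Suc (Suc m) * power_sum_poly k (Suc m) = eulerian_op m ([:1, -1:] ^ Suc m * (power_sum_poly k m :: 'a::idom poly))"
  by (simp only: power_sum_poly_Suc eulerian_op_one_minus_power)

lemma one_minus_power_mult_power_sum_poly:
  assumes "1 \<le> m"
  shows "[:1, -1:] ^ Suc m * power_sum_poly k m = eulerian_poly m - monom (1::'a::idom) (k + 1) * eulerian_k_poly k m"
  using assms
proof (induction m rule: dec_induct)
  case base
  have "eulerian_op 0 [:0, 1::'a:] = [:0, 1:]"
    by (rule poly_eqI) (simp add: coeff_pCons split: nat.split)
  moreover have "eulerian_poly 1 = [:0, 1::'a:]"
    by (rule poly_eqI) (simp add: coeff_pCons split: nat.split)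
  moreover have "[:1, -1:] ^ Suc 1 * power_sum_poly k 1
      = eulerian_op 0 [:0, 1:] - eulerian_op 0 (monom (1::'a) (k + 1) * eulerian_k_poly k 0)"
    using one_minus_power_mult_power_sum_poly_Suc[of 0 k]
    by (simp only: One_nat_def power_Suc0_right one_minus_mult_power_sum_poly_0 eulerian_op_diff)
  ultimately show ?case
    using eulerian_k_poly_Suc[of k 0] by (metis One_nat_def)
next
  case (step m)
  then show ?case
    by (simp only: one_minus_power_mult_power_sum_poly_Suc eulerian_op_diff eulerian_poly_Suc eulerian_k_poly_Suc)
qed

lemma one_minus_power_mult_power_sum:
  fixes x :: "'a::idom"
  assumes "1 \<le> m"
  shows "(1 - x) ^ Suc m * (\<Sum>i=1..k. of_nat i ^ m * x ^ i)
    = (\<Sum>i\<le>m. of_int (eulerian m i) * x ^ i) - x ^ (k + 1) * (\<Sum>i\<le>m. of_int (eulerian_k (int k) m i) * x ^ i)"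
  using arg_cong[OF one_minus_power_mult_power_sum_poly[OF assms, of k], of "\<lambda>P. poly P x"]
  by (simp add: power_sum_poly_def eulerian_poly_def eulerian_k_poly_def poly_sum poly_monom del: power_Suc)

lemma first_step_sum_divide_power:
  fixes p :: real and E :: "nat \<Rightarrow> real"
  assumes "0 < p"
  shows "(\<Sum>i<k. p ^ i * (1 - p) * (\<Sum>j<n. real (n choose j) * real (Suc i) ^ (n - j) * E j)) / p ^ k
    = (\<Sum>j<n. real (n choose j) * E j * (\<Sum>i=1..k. (1 - p) * real i ^ (n - j) / p ^ (k - i + 1)))"
proof -
  have summand: "p ^ i * (1 - p) * (real (n choose j) * real (Suc i) ^ (n - j) * E j) / p ^ k
      = real (n choose j) * E j * ((1 - p) * real (Suc i) ^ (n - j) / p ^ (k - Suc i + 1))" if "i < k" for i j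
  proof -
    from that have "k = i + (k - Suc i + 1)"
      by simp
    then have "p ^ k = p ^ i * p ^ (k - Suc i + 1)"
      by (metis power_add)
    then show ?thesis
      using assms by (simp add: field_simps)
  qed
  have "(\<Sum>i<k. p ^ i * (1 - p) * (\<Sum>j<n. real (n choose j) * real (Suc i) ^ (n - j) * E j)) / p ^ k
      = (\<Sum>i<k. \<Sum>j<n. real (n choose j) * E j * ((1 - p) * real (Suc i) ^ (n - j) / p ^ (k - Suc i + 1)))"
    unfolding sum_divide_distrib sum_distrib_left by (intro sum.cong refl summand) simp
  also have "\<dots> = (\<Sum>j<n. real (n choose j) * E j * (\<Sum>i<k. (1 - p) * real (Suc i) ^ (n - j) / p ^ (k - Suc i + 1)))"
    by (subst sum.swap) (simp add: sum_distrib_left)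
  also have "\<dots> = (\<Sum>j<n. real (n choose j) * E j * (\<Sum>i=1..k. (1 - p) * real i ^ (n - j) / p ^ (k - i + 1)))"
    by (simp add: sum.atLeast1_atMost_eq)
  finally show ?thesis .
qed

lemma power_sum_divide_eq_eulerian:
  fixes p :: real
  assumes "0 < p" "p < 1" "1 \<le> m" "m \<le> n"
  shows "(\<Sum>i=1..k. (1 - p) * real i ^ m / p ^ (k - i + 1))
    = (\<Sum>i=0..n. (real_of_int (eulerian m i) * p ^ i - real_of_int (eulerian_k (int k) m i) * p ^ (k + i + 1))
                 / ((1 - p) ^ m * p ^ (k + 1)))"
proof -
  have "(\<Sum>i=1..k. (1 - p) * real i ^ m / p ^ (k - i + 1))
      = (1 - p) ^ Suc m * (\<Sum>i=1..k. real i ^ m * p ^ i) / ((1 - p) ^ m * p ^ (k + 1))"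
  proof -
    have "(1 - p) * real i ^ m / p ^ (k - i + 1) = (1 - p) * (real i ^ m * p ^ i) / p ^ (k + 1)" if "i \<in> {1..k}" for i
    proof -
      have "p ^ (k + 1) = p ^ i * p ^ (k - i + 1)"
        using that by (simp flip: power_add)
      then show ?thesis
        using assms(1) by (simp add: field_simps)
    qed
    then show ?thesis
      using assms(1,2) by (simp add: sum_divide_distrib sum_distrib_left)
  qed
  also have "\<dots> = ((\<Sum>i\<le>m. real_of_int (eulerian m i) * p ^ i)
      - p ^ (k + 1) * (\<Sum>i\<le>m. real_of_int (eulerian_k (int k) m i) * p ^ i)) / ((1 - p) ^ m * p ^ (k + 1))"
    using one_minus_power_mult_power_sum[OF assms(3), of p k] by simp
  also have "\<dots> = (\<Sum>i\<le>m. real_of_int (eulerian m i) * p ^ i - real_of_int (eulerian_k (int k) m i) * p ^ (k + i + 1))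
      / ((1 - p) ^ m * p ^ (k + 1))"
    by (simp add: sum_subtractf sum_distrib_left power_add mult_ac)
  also have "\<dots> = (\<Sum>i=0..n. real_of_int (eulerian m i) * p ^ i - real_of_int (eulerian_k (int k) m i) * p ^ (k + i + 1))
      / ((1 - p) ^ m * p ^ (k + 1))"
    using assms(4) by (intro arg_cong2[where f = "(/)"] sum.mono_neutral_left) (auto simp: eulerian_eq_0 eulerian_k_eq_0)
  finally show ?thesis
    by (simp add: sum_divide_distrib)
qed

theorem theorem3p1:
  fixes p :: real and k :: nat
  assumes "0 < p" and "p < 1" and "1 \<le> k"
  defines "M \<equiv> stream_space (measure_pmf (bernoulli_pmf p))"
    and "E \<equiv> (\<lambda>j::nat. LINT \<omega>|stream_space (measure_pmf (bernoulli_pmf p)). real (waiting_time k \<omega>) ^ j)"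
  shows "(\<forall>n. integrable M (\<lambda>\<omega>. real (waiting_time k \<omega>) ^ n))
    \<and> E 0 = 1
    \<and> (\<forall>n\<ge>1.
         E n = real k ^ n + (\<Sum>j<n. real (n choose j) * E j *
                 (\<Sum>i=1..k. (1 - p) * real i ^ (n - j) / p ^ (k - i + 1)))
       \<and> E n = real k ^ n + (\<Sum>j<n. real (n choose j) * E j *
                 (\<Sum>i=0..n. (real_of_int (eulerian (n - j) i) * p ^ i
                              - real_of_int (eulerian_k (int k) (n - j) i) * p ^ (k + i + 1))
                            / ((1 - p) ^ (n - j) * p ^ (k + 1)))))"
proof -
  have recurrence: "E n = real k ^ n + (\<Sum>j<n. real (n choose j) * E j *
      (\<Sum>i=1..k. (1 - p) * real i ^ (n - j) / p ^ (k - i + 1)))" for n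
  proof -
    have "p ^ k * E n
        = (\<Sum>i<k. p ^ i * (1 - p) * (\<Sum>j<n. real (n choose j) * real (Suc i) ^ (n - j) * E j)) + p ^ k * real k ^ n"
      unfolding E_def by (rule moment_waiting_time_first_step[OF assms(1,2)])
    then have "E n = real k ^ n
        + (\<Sum>i<k. p ^ i * (1 - p) * (\<Sum>j<n. real (n choose j) * real (Suc i) ^ (n - j) * E j)) / p ^ k"
      using assms(1) by (simp add: field_simps)
    then show ?thesis
      by (simp only: first_step_sum_divide_power[OF assms(1)])
  qed
  have eulerian: "(\<Sum>j<n. real (n choose j) * E j * (\<Sum>i=1..k. (1 - p) * real i ^ (n - j) / p ^ (k - i + 1)))
      = (\<Sum>j<n. real (n choose j) * E j *
          (\<Sum>i=0..n. (real_of_int (eulerian (n - j) i) * p ^ i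
                       - real_of_int (eulerian_k (int k) (n - j) i) * p ^ (k + i + 1))
                     / ((1 - p) ^ (n - j) * p ^ (k + 1))))" for n
    by (intro sum.cong refl arg_cong2[where f = "(*)"] power_sum_divide_eq_eulerian assms(1,2)) auto
  have "E 0 = 1"
    using prob_space.prob_space[OF prob_space_coin_flips] unfolding E_def by simp
  then show ?thesis
    unfolding M_def using integrable_waiting_time_power[OF assms(1,2)] recurrence eulerian by metis
qed

end
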